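(* For a parking graph $P$ on $[n]$, let $\mathbf{d}(P)=(d_1,\dots,d_n)$ where $d_i$ is the number of directed edges (up or down edges) of $P$ pointing into vertex $i$ (downish edges are not counted), and set $\phi(P):=\mathbf{d}(P)+(1,1,\dots,1)$. Then $\phi$ is a bijection from the set of parking graphs on $[n]$ to the set of parking functions of length $n$.
   Context: A parking function of length $n$ is a sequence $(x_1,\dots,x_n)$ of positive integers which, when rearranged in weakly increasing order $x_{(1)}\le\dots\le x_{(n)}$, satisfies $x_{(k)}\le k$ for all $k$; equivalently, it is componentwise at most some permutation of $(1,2,\dots,n)$. A mixed graph may contain both undirected and directed edges. A parking graph $P$ on $[n]$ is a mixed graph with vertex set $[n]$ in which every pair $\{j,k\}$ with $1\le j<k\le n$ is joined by exactly one edge, which is of exactly one of three types: a down edge $j\leftarrow k$ (directed from $k$ to $j$), an up edge $j\rightarrow k$ (directed from $j$ to $k$), or a downish edge $jk$ (undirected). Let $\vec P$ be the directed graph obtained from $P$ by keeping all directed edges and replacing every downish edge $jk$ ($j<k$) by the directed edge $j\leftarrow k$. $P$ must satisfy the source-sink condition: (i) $\vec P$ is acyclic, and (ii) for every triangle of $P$ among whose three edges there is at least one down edge and at least one downish edge, the source (vertex of in-degree $0$ within the triangle in $\vec P$) and the sink (vertex of out-degree $0$ within the triangle in $\vec P$) are not joined by a downish edge in $P$. *)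

theory Defs
  imports Main "HOL-Combinatorics.Permutations"
begin

datatype edge_type = Down | Up | Downish

text \<open>A parking graph on [n] = {1..n} is encoded by a function E such that for
  1 \<le> j < k \<le> n, E j k is the type of the edge between j and k:
  Down means j \<leftarrow> k, Up means j \<rightarrow> k, Downish is the undirected edge jk.
  Values of E outside such pairs are fixed to Down (extensionality), so that
  distinct functions correspond to distinct parking graphs.\<close>

definition edge_pairs :: "nat \<Rightarrow> (nat \<times> nat) set" where
  "edge_pairs n = {(j, k). 1 \<le> j \<and> j < k \<and> k \<le> n}"

definition etype :: "(nat \<Rightarrow> nat \<Rightarrow> edge_type) \<Rightarrow> nat \<Rightarrow> nat \<Rightarrow> edge_type" where
  "etype E a b = (if a < b then E a b else E b a)"

definition arcs :: "nat \<Rightarrow> (nat \<Rightarrow> nat \<Rightarrow> edge_type) \<Rightarrow> (nat \<times> nat) set" where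
  "arcs n E = {(k, j) | j k. (j, k) \<in> edge_pairs n \<and> E j k \<noteq> Up}
            \<union> {(j, k) | j k. (j, k) \<in> edge_pairs n \<and> E j k = Up}"

definition triangle_cond :: "nat \<Rightarrow> (nat \<Rightarrow> nat \<Rightarrow> edge_type) \<Rightarrow> bool" where
  "triangle_cond n E \<longleftrightarrow>
    (\<forall>a\<in>{1..n}. \<forall>b\<in>{1..n}. \<forall>c\<in>{1..n}. a \<noteq> b \<and> b \<noteq> c \<and> a \<noteq> c \<longrightarrow>
       (let T = {a, b, c};
            ts = {etype E a b, etype E b c, etype E a c} in
        Down \<in> ts \<and> Downish \<in> ts \<longrightarrow>
        (\<forall>s\<in>T. \<forall>t\<in>T.
           (\<forall>u\<in>T. (u, s) \<notin> arcs n E) \<and> (\<forall>u\<in>T. (t, u) \<notin> arcs n E) \<and> s \<noteq> t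
           \<longrightarrow> etype E s t \<noteq> Downish)))"

definition parking_graphs :: "nat \<Rightarrow> (nat \<Rightarrow> nat \<Rightarrow> edge_type) set" where
  "parking_graphs n = {E. (\<forall>j k. (j, k) \<notin> edge_pairs n \<longrightarrow> E j k = Down)
                          \<and> acyclic (arcs n E) \<and> triangle_cond n E}"

definition parking_functions :: "nat \<Rightarrow> (nat \<Rightarrow> nat) set" where
  "parking_functions n = {x. (\<forall>i. i \<notin> {1..n} \<longrightarrow> x i = 0) \<and> (\<forall>i\<in>{1..n}. 1 \<le> x i) \<and>
      (\<exists>\<sigma>. \<sigma> permutes {1..n} \<and> (\<forall>i\<in>{1..n}. x i \<le> \<sigma> i))}"

definition directed_indeg :: "nat \<Rightarrow> (nat \<Rightarrow> nat \<Rightarrow> edge_type) \<Rightarrow> nat \<Rightarrow> nat" where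
  "directed_indeg n E i = card {u \<in> {1..n}. u \<noteq> i \<and> (u, i) \<in> arcs n E \<and> etype E u i \<noteq> Downish}"

definition phi :: "nat \<Rightarrow> (nat \<Rightarrow> nat \<Rightarrow> edge_type) \<Rightarrow> (nat \<Rightarrow> nat)" where
  "phi n E = (\<lambda>i. if i \<in> {1..n} then directed_indeg n E i + 1 else 0)"

end

theory Submission
  imports Defs
begin

(* Since vec P is an
   acyclic tournament, its arcs form a strict linear order on [n]; phi E z - 1 counts the
   predecessors x of z with x < z (up edges) or with a down edge xz.

   If two parking graphs E, E' with phi E = phi E' have the same order, the
   counted predecessor sets of each vertex form a chain (by the source-sink condition)
   of equal sizes, hence coincide, and they determine every edge type.  Otherwise let A
   be the longest common initial segment of both orders, followed by u in E and u' in E';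
   counting predecessors of u and u' in both graphs contradicts the source-sink condition.

   Image.  The rank of a vertex in the order bounds phi E by a permutation of [n].

   For a parking function a, a greedy procedure places the vertices one at
   a time: a placed vertex receives up edges from its smaller predecessors and down edges
   from an initial run of its larger ones, just enough to give it in-degree a w - 1; among
   the vertices for which this is possible it picks one needing the shortest run.  Down
   edges out of a vertex then persist along the order, which yields the source-sink
   condition for the resulting graph, and phi of it is a by construction. *)

lemma etype_sym: "a \<noteq> b \<Longrightarrow> etype E a b = etype E b a"
  by (auto simp: etype_def)

lemma arc_iff:
  "(x, y) \<in> arcs n E \<longleftrightarrow> x \<in> {1..n} \<and> y \<in> {1..n} \<and> x \<noteq> y \<and>
     ((x < y \<and> etype E x y = Up) \<or> (y < x \<and> etype E x y \<noteq> Up))"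
  unfolding arcs_def edge_pairs_def etype_def by auto

lemma arc_total:
  assumes "x \<in> {1..n}" "y \<in> {1..n}" "x \<noteq> y"
  shows "(x, y) \<in> arcs n E \<or> (y, x) \<in> arcs n E"
  using assms unfolding arc_iff by (cases "x < y") (auto simp: etype_sym)

lemma arc_asym: "(x, y) \<in> arcs n E \<Longrightarrow> (y, x) \<notin> arcs n E"
  unfolding arc_iff by (auto simp: etype_sym)

lemma arc_trans:
  assumes "acyclic (arcs n E)" "(x, y) \<in> arcs n E" "(y, z) \<in> arcs n E"
  shows "(x, z) \<in> arcs n E"
proof -
  have xz: "x \<in> {1..n}" "z \<in> {1..n}" "x \<noteq> z"
    using assms(2,3) arc_asym[of x y] unfolding arc_iff by auto
  have "(z, x) \<notin> arcs n E"
  proof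
    assume "(z, x) \<in> arcs n E"
    then have "(x, x) \<in> (arcs n E)\<^sup>+" using assms(2,3)
      by (meson trancl.r_into_trancl trancl_into_trancl)
    then show False using assms(1) unfolding acyclic_def by blast
  qed
  then show ?thesis using arc_total[OF xz] by blast
qed

lemma parking_graphD:
  assumes "E \<in> parking_graphs n"
  shows "acyclic (arcs n E)" "triangle_cond n E" "\<And>j k. (j, k) \<notin> edge_pairs n \<Longrightarrow> E j k = Down"
  using assms unfolding parking_graphs_def by auto

lemma downish_shortcut:
  assumes tri: "triangle_cond n E"
    and xy: "(x, y) \<in> arcs n E" and yz: "(y, z) \<in> arcs n E" and xz: "(x, z) \<in> arcs n E"
    and W: "etype E x z = Downish"
  shows "etype E x y \<noteq> Down \<and> etype E y z \<noteq> Down"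
proof (rule ccontr)
  assume down: "\<not> (etype E x y \<noteq> Down \<and> etype E y z \<noteq> Down)"
  have r: "x \<in> {1..n}" "y \<in> {1..n}" "z \<in> {1..n}" "x \<noteq> y" "y \<noteq> z" "x \<noteq> z"
    using xy yz xz unfolding arc_iff by auto
  have source: "\<forall>v\<in>{x,y,z}. (v, x) \<notin> arcs n E"
    using xy xz arc_asym[of x y n E] arc_asym[of x z n E] r by (auto simp: arc_iff)
  have sink: "\<forall>v\<in>{x,y,z}. (z, v) \<notin> arcs n E"
    using yz xz arc_asym[of y z n E] arc_asym[of x z n E] r by (auto simp: arc_iff)
  have types: "Down \<in> {etype E x y, etype E y z, etype E x z}"
      "Downish \<in> {etype E x y, etype E y z, etype E x z}"
    using down W by auto
  have "etype E x z \<noteq> Downish"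
    using tri r types source sink unfolding triangle_cond_def Let_def by blast
  then show False using W by simp
qed

definition preds :: "nat \<Rightarrow> (nat \<Rightarrow> nat \<Rightarrow> edge_type) \<Rightarrow> nat \<Rightarrow> nat set" where
  "preds n E v = {x. (x, v) \<in> arcs n E}"

definition counted_preds :: "nat \<Rightarrow> (nat \<Rightarrow> nat \<Rightarrow> edge_type) \<Rightarrow> nat \<Rightarrow> nat set" where
  "counted_preds n E z = {u \<in> {1..n}. u \<noteq> z \<and> (u, z) \<in> arcs n E \<and> etype E u z \<noteq> Downish}"

lemma phi_eq_card: "z \<in> {1..n} \<Longrightarrow> phi n E z = card (counted_preds n E z) + 1"
  unfolding phi_def directed_indeg_def counted_preds_def by simp

lemma preds_subset: "preds n E v \<subseteq> {1..n} - {v}"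
  unfolding preds_def arc_iff by auto

lemma finite_preds: "finite (preds n E v)"
  by (rule finite_subset[OF preds_subset]) simp

lemma counted_preds_eq:
  "counted_preds n E z = {x \<in> preds n E z. x < z \<or> etype E x z = Down}"
proof (rule set_eqI)
  fix x
  show "x \<in> counted_preds n E z \<longleftrightarrow> x \<in> {x \<in> preds n E z. x < z \<or> etype E x z = Down}"
    unfolding counted_preds_def preds_def arc_iff by (cases "etype E x z") auto
qed

lemma finite_counted_preds: "finite (counted_preds n E z)"
  unfolding counted_preds_eq using finite_preds by simp

text \<open>Predecessor sets strictly grow along arcs; hence their sizes rank the vertices.\<close>
lemma card_preds_less:
  assumes "E \<in> parking_graphs n" "(x, y) \<in> arcs n E"
  shows "card (preds n E x) < card (preds n E y)"
proof (rule psubset_card_mono[OF finite_preds])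
  have "preds n E x \<subseteq> preds n E y"
    using arc_trans[OF parking_graphD(1)[OF assms(1)] _ assms(2)] unfolding preds_def by blast
  moreover have "x \<in> preds n E y" "x \<notin> preds n E x" using assms(2) unfolding preds_def arc_iff by auto
  ultimately show "preds n E x \<subset> preds n E y" by blast
qed

section \<open>Injectivity\<close>

text \<open>Counted predecessor sets form a chain: if z has a common set P of predecessors in two
  parking graphs, ordered alike, then the counted parts of P in both graphs are nested.
  Otherwise two larger vertices x, y in P would each be a down predecessor of z in one
  graph and a downish one in the other, violating the source-sink condition.\<close>
lemma counted_chain:
  assumes E: "E \<in> parking_graphs n" and E': "E' \<in> parking_graphs n"
    and P: "\<forall>x\<in>P. (x, z) \<in> arcs n E \<and> (x, z) \<in> arcs n E'"
    and ord: "\<forall>x\<in>P. \<forall>y\<in>P. (x, y) \<in> arcs n E \<longleftrightarrow> (x, y) \<in> arcs n E'"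
  shows "{x\<in>P. x < z \<or> etype E x z = Down} \<subseteq> {x\<in>P. x < z \<or> etype E' x z = Down}
       \<or> {x\<in>P. x < z \<or> etype E' x z = Down} \<subseteq> {x\<in>P. x < z \<or> etype E x z = Down}"
proof (rule ccontr)
  assume "\<not> ?thesis"
  then obtain x y where x: "x \<in> P" "\<not> x < z" "etype E x z = Down" "etype E' x z \<noteq> Down"
    and y: "y \<in> P" "\<not> y < z" "etype E' y z = Down" "etype E y z \<noteq> Down"
    by blast
  have arcs: "(x, z) \<in> arcs n E" "(x, z) \<in> arcs n E'" "(y, z) \<in> arcs n E" "(y, z) \<in> arcs n E'"
    using P x y by auto
  have downish: "etype E' x z = Downish" "etype E y z = Downish"
    using x y arcs(2,3) unfolding arc_iff by (metis edge_type.exhaust)+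
  have "x \<in> {1..n}" "y \<in> {1..n}" "x \<noteq> y" using x y arcs unfolding arc_iff by auto
  then have "(x, y) \<in> arcs n E \<or> (y, x) \<in> arcs n E" by (rule arc_total)
  then consider "(x, y) \<in> arcs n E'" | "(y, x) \<in> arcs n E"
    using ord x(1) y(1) by blast
  then show False
  proof cases
    case 1
    then show False
      using downish_shortcut[OF parking_graphD(2)[OF E'] _ arcs(4,2) downish(1)] y by blast
  next
    case 2
    then show False
      using downish_shortcut[OF parking_graphD(2)[OF E] _ arcs(1,3) downish(2)] x by blast
  qed
qed

lemma chain_card_le_subset:
  assumes "finite A" "finite B" "A \<subseteq> B \<or> B \<subseteq> A" "card B \<le> card A"
  shows "B \<subseteq> A"
  using assms card_subset_eq[of B A] card_mono[of B A] by fastforce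

text \<open>Two parking graphs with the same arcs and the same image under phi coincide: the
  counted predecessor sets are then equal, and these determine the down edges.\<close>
lemma same_arcs_same_graph:
  assumes E: "E \<in> parking_graphs n" and E': "E' \<in> parking_graphs n"
    and arcs_eq: "arcs n E = arcs n E'" and phi_eq: "phi n E = phi n E'"
  shows "E = E'"
proof -
  have counted_eq: "counted_preds n E z = counted_preds n E' z" if z: "z \<in> {1..n}" for z
  proof -
    have chain: "counted_preds n E z \<subseteq> counted_preds n E' z \<or> counted_preds n E' z \<subseteq> counted_preds n E z"
      unfolding counted_preds_eq preds_def arcs_eq
      by (rule counted_chain[OF E E']) (auto simp: arcs_eq)
    have "card (counted_preds n E z) = card (counted_preds n E' z)"
      using phi_eq phi_eq_card[OF z] by (metis add_right_cancel)
    then show ?thesis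
      using chain chain_card_le_subset[OF finite_counted_preds finite_counted_preds] by (metis order.refl subset_antisym)
  qed
  have "E j k = E' j k" for j k
  proof (cases "(j, k) \<in> edge_pairs n")
    case False
    then show ?thesis using parking_graphD(3)[OF E] parking_graphD(3)[OF E'] by metis
  next
    case True
    then have jk: "j < k" "j \<in> {1..n}" "k \<in> {1..n}" unfolding edge_pairs_def by auto
    then have et: "etype E k j = E j k" "etype E' k j = E' j k" "etype E j k = E j k" "etype E' j k = E' j k"
      unfolding etype_def by auto
    show ?thesis
    proof (cases "(j, k) \<in> arcs n E")
      case True
      moreover have "(j, k) \<in> arcs n E'" using True arcs_eq by simp
      ultimately show ?thesis using jk et unfolding arc_iff by auto
    next
      case False
      then have kj: "(k, j) \<in> arcs n E" "(k, j) \<in> arcs n E'"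
        using arc_total[OF jk(2,3)] jk arcs_eq by auto
      have "k \<in> counted_preds n E j \<longleftrightarrow> k \<in> counted_preds n E' j" using counted_eq jk by simp
      then have "E j k = Down \<longleftrightarrow> E' j k = Down"
        using kj jk et unfolding counted_preds_eq preds_def by auto
      moreover have "E j k \<noteq> Up" "E' j k \<noteq> Up" using kj jk et unfolding arc_iff by auto
      ultimately show ?thesis by (cases "E j k"; cases "E' j k") auto
    qed
  qed
  then show ?thesis by blast
qed

lemma first_vertex_outside:
  assumes E': "E' \<in> parking_graphs n" and A: "A \<subseteq> {1..n}" and v: "v \<in> {1..n}" "v \<notin> A"
    and closed: "\<And>x y. x \<in> A \<Longrightarrow> (y, x) \<in> arcs n E' \<Longrightarrow> y \<in> A"
  shows "\<exists>u'\<in>{1..n}. u' \<notin> A \<and> preds n E' u' = A"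
proof -
  obtain u' where u': "u' \<in> {1..n}" "u' \<notin> A"
    and least: "\<And>w. w \<in> {1..n} \<Longrightarrow> w \<notin> A \<Longrightarrow> card (preds n E' u') \<le> card (preds n E' w)"
    using ex_has_least_nat[of "\<lambda>w. w \<in> {1..n} \<and> w \<notin> A" v "\<lambda>w. card (preds n E' w)"] v
    by blast
  have "A \<subseteq> preds n E' u'"
  proof
    fix x assume "x \<in> A"
    then have "(u', x) \<notin> arcs n E'" "x \<noteq> u'" "x \<in> {1..n}" using closed u' A by auto
    then show "x \<in> preds n E' u'" using arc_total[OF _ u'(1)] unfolding preds_def by blast
  qed
  moreover have "preds n E' u' \<subseteq> A"
  proof
    fix y assume y: "y \<in> preds n E' u'"
    show "y \<in> A"
    proof (rule ccontr)
      assume "y \<notin> A"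
      then have "card (preds n E' u') \<le> card (preds n E' y)" using least y preds_subset by blast
      then show False using card_preds_less[OF E'] y unfolding preds_def by fastforce
    qed
  qed
  ultimately show ?thesis using u' by blast
qed

text \<open>The situation at the first divergence of the orders of E and E': A is the common
  initial segment, followed by u in E and by u' in E'.  For u < u', counting at u' shows
  that some x in A is a down predecessor of u' in E' but a downish predecessor of u in E.\<close>
lemma divergence_witness:
  assumes E: "E \<in> parking_graphs n" and E': "E' \<in> parking_graphs n"
    and A: "A \<subseteq> {1..n}" "u \<notin> A"
    and pu: "preds n E u = A" and pu': "preds n E' u' = A"
    and uu': "(u, u') \<in> arcs n E" and lt: "u < u'"
    and card_eq: "card (counted_preds n E' u') = card (counted_preds n E u')"
  shows "\<exists>x\<in>A. u' < x \<and> etype E' x u' = Down \<and> etype E x u = Downish"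
proof -
  have fin: "finite A" using A finite_subset by blast
  define S where "S = {x\<in>A. x < u' \<or> etype E x u' = Down}"
  define S' where "S' = {x\<in>A. x < u' \<or> etype E' x u' = Down}"
  have xu': "(x, u') \<in> arcs n E" if "x \<in> A" for x
    using arc_trans[OF parking_graphD(1)[OF E] _ uu'] pu that unfolding preds_def by blast
  have "insert u S \<subseteq> counted_preds n E u'"
    using uu' lt xu' unfolding counted_preds_eq S_def preds_def by auto
  then have "card (insert u S) \<le> card (counted_preds n E u')" by (rule card_mono[OF finite_counted_preds])
  moreover have "card (insert u S) = card S + 1" using A fin unfolding S_def by simp
  moreover have "counted_preds n E' u' = S'" unfolding counted_preds_eq pu' S'_def ..
  ultimately have "card S < card S'" using card_eq by simp
  then have "\<not> S' \<subseteq> S" using card_mono[of S S'] fin unfolding S_def by auto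
  then obtain x where x: "x \<in> A" "\<not> x < u'" "etype E' x u' = Down" "etype E x u' \<noteq> Down"
    unfolding S_def S'_def by blast
  have "x \<noteq> u'" using x pu' preds_subset by blast
  then have gt: "u' < x" using x by simp
  then have "etype E x u' = Downish"
    using x(4) xu'[OF x(1)] unfolding arc_iff by (cases "etype E x u'") auto
  moreover have xu: "(x, u) \<in> arcs n E" using pu x unfolding preds_def by blast
  ultimately have "etype E x u \<noteq> Down"
    using downish_shortcut[OF parking_graphD(2)[OF E] xu uu' xu'[OF x(1)]] by blast
  moreover have "etype E x u \<noteq> Up" using xu gt lt unfolding arc_iff by auto
  ultimately have "etype E x u = Downish" by (cases "etype E x u") auto
  then show ?thesis using x gt by blast
qed

text \<open>Counting at u rules out such a witness: it would be counted at u in neither graph,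
  hence downish at u in E', and the source-sink condition in E' forbids the down edge
  towards u'.\<close>
lemma divergence_impossible:
  assumes E: "E \<in> parking_graphs n" and E': "E' \<in> parking_graphs n"
    and pu: "preds n E u = A" and pu': "preds n E' u' = A" and u'u: "(u', u) \<in> arcs n E'"
    and ord: "\<forall>x\<in>A. \<forall>y\<in>A. (x, y) \<in> arcs n E \<longleftrightarrow> (x, y) \<in> arcs n E'"
    and card_eq: "card (counted_preds n E' u) = card (counted_preds n E u)"
    and x: "x \<in> A" "u < x" "etype E x u = Downish"
  shows "etype E' x u' \<noteq> Down"
proof -
  define T where "T = {y\<in>A. y < u \<or> etype E y u = Down}"
  define T' where "T' = {y\<in>A. y < u \<or> etype E' y u = Down}"
  have fin: "finite A" using pu finite_preds by blast
  have yu: "(y, u) \<in> arcs n E'" if "y \<in> A" for y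
    using arc_trans[OF parking_graphD(1)[OF E'] _ u'u] pu' that unfolding preds_def by blast
  have "T' \<subseteq> counted_preds n E' u" using yu unfolding counted_preds_eq T'_def preds_def by auto
  then have "card T' \<le> card (counted_preds n E' u)" by (rule card_mono[OF finite_counted_preds])
  moreover have "counted_preds n E u = T" unfolding counted_preds_eq pu T_def ..
  ultimately have "card T' \<le> card T" using card_eq by simp
  moreover have "T \<subseteq> T' \<or> T' \<subseteq> T" unfolding T_def T'_def
    by (rule counted_chain[OF E E']) (use pu yu ord in \<open>auto simp: preds_def\<close>)
  ultimately have "T' \<subseteq> T" using chain_card_le_subset[of T T'] fin unfolding T_def T'_def by auto
  moreover have "x \<notin> T" using x unfolding T_def by auto
  ultimately have "etype E' x u \<noteq> Down" using x unfolding T'_def by auto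
  then have "etype E' x u = Downish"
    using yu[OF x(1)] x(2) unfolding arc_iff by (cases "etype E' x u") auto
  then show ?thesis
    using downish_shortcut[OF parking_graphD(2)[OF E'] _ u'u yu[OF x(1)]] pu' x(1)
    unfolding preds_def by blast
qed

lemma no_divergence:
  assumes E: "E \<in> parking_graphs n" and E': "E' \<in> parking_graphs n" and phi_eq: "phi n E = phi n E'"
    and A: "A \<subseteq> {1..n}" "u \<notin> A"
    and pu: "preds n E u = A" and pu': "preds n E' u' = A"
    and uu': "(u, u') \<in> arcs n E" and u'u: "(u', u) \<in> arcs n E'"
    and ord: "\<forall>x\<in>A. \<forall>y\<in>A. (x, y) \<in> arcs n E \<longleftrightarrow> (x, y) \<in> arcs n E'"
    and lt: "u < u'"
  shows False
proof -
  have card_eq: "card (counted_preds n E' z) = card (counted_preds n E z)" if "z \<in> {1..n}" for z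
    using phi_eq phi_eq_card[OF that] by (metis add_right_cancel)
  have un: "u \<in> {1..n}" "u' \<in> {1..n}" using uu' unfolding arc_iff by auto
  obtain x where x: "x \<in> A" "u' < x" "etype E' x u' = Down" "etype E x u = Downish"
    using divergence_witness[OF E E' A pu pu' uu' lt card_eq[OF un(2)]] by blast
  have "u < x" using lt x(2) by simp
  then have "etype E' x u' \<noteq> Down"
    by (rule divergence_impossible[OF E E' pu pu' u'u ord card_eq[OF un(1)] x(1) _ x(4)])
  then show False using x(3) by simp
qed

lemma arcs_eq_if_preds_eq:
  assumes "\<forall>v\<in>{1..n}. preds n E v = preds n E' v"
  shows "arcs n E = arcs n E'"
proof -
  have "(x, y) \<in> arcs n E \<longleftrightarrow> (x, y) \<in> arcs n E'" for x y
  proof (cases "y \<in> {1..n}")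
    case True
    then have "preds n E y = preds n E' y" using assms by blast
    then show ?thesis unfolding preds_def by blast
  next
    case False
    then show ?thesis unfolding arc_iff by auto
  qed
  then show ?thesis by auto
qed

lemma first_disagreement:
  assumes E: "E \<in> parking_graphs n" and v: "v \<in> {1..n}" "preds n E v \<noteq> preds n E' v"
  shows "\<exists>u\<in>{1..n}. preds n E u \<noteq> preds n E' u \<and> (\<forall>x\<in>preds n E u. preds n E x = preds n E' x)"
proof -
  obtain u where u: "u \<in> {1..n}" "preds n E u \<noteq> preds n E' u"
    and least: "\<And>w. w \<in> {1..n} \<Longrightarrow> preds n E w \<noteq> preds n E' w \<Longrightarrow> card (preds n E u) \<le> card (preds n E w)"
    using ex_has_least_nat[of "\<lambda>w. w \<in> {1..n} \<and> preds n E w \<noteq> preds n E' w" v "\<lambda>w. card (preds n E w)"] v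
    by blast
  have "preds n E x = preds n E' x" if x: "x \<in> preds n E u" for x
  proof (rule ccontr)
    assume "preds n E x \<noteq> preds n E' x"
    then have "card (preds n E u) \<le> card (preds n E x)" using least preds_subset x by blast
    moreover have "(x, u) \<in> arcs n E" using x unfolding preds_def by simp
    ultimately show False using card_preds_less[OF E] by fastforce
  qed
  then show ?thesis using u by blast
qed

text \<open>phi is injective: if the orders of E and E' differ, the E-predecessors A of the
  first disagreement u form a common initial segment of both orders, followed by u in E
  and by some u' in E', which no_divergence rules out.\<close>
lemma phi_inj:
  assumes E: "E \<in> parking_graphs n" and E': "E' \<in> parking_graphs n" and phi_eq: "phi n E = phi n E'"
  shows "E = E'"
proof (cases "\<forall>v\<in>{1..n}. preds n E v = preds n E' v")
  case True
  then show ?thesis using same_arcs_same_graph[OF E E' arcs_eq_if_preds_eq phi_eq] by simp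
next
  case False
  then obtain u where u: "u \<in> {1..n}" "preds n E u \<noteq> preds n E' u"
    and agree: "\<And>x. x \<in> preds n E u \<Longrightarrow> preds n E x = preds n E' x"
    using first_disagreement[OF E] by blast
  define A where "A = preds n E u"
  have A: "A \<subseteq> {1..n}" "u \<notin> A" using preds_subset unfolding A_def by auto
  have ord: "\<forall>x\<in>A. \<forall>y\<in>A. (x, y) \<in> arcs n E \<longleftrightarrow> (x, y) \<in> arcs n E'"
    using agree unfolding A_def preds_def by blast
  have closed: "y \<in> A" if x: "x \<in> A" and yx: "(y, x) \<in> arcs n E'" for x y
  proof -
    have "(y, x) \<in> arcs n E" using yx agree x unfolding A_def preds_def by blast
    moreover have "(x, u) \<in> arcs n E" using x unfolding A_def preds_def by simp
    ultimately show "y \<in> A" using arc_trans[OF parking_graphD(1)[OF E]] unfolding A_def preds_def by blast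
  qed
  obtain u' where u': "u' \<in> {1..n}" "u' \<notin> A" and pu': "preds n E' u' = A"
    using first_vertex_outside[OF E' A(1) u(1) A(2)] closed by blast
  have pu: "preds n E u = A" unfolding A_def ..
  have "u' \<noteq> u" using pu' u(2) pu by auto
  then have total: "(u, u') \<in> arcs n E \<or> (u', u) \<in> arcs n E" "(u, u') \<in> arcs n E' \<or> (u', u) \<in> arcs n E'"
    using arc_total[OF u(1) u'(1)] by auto
  have uu': "(u, u') \<in> arcs n E" using total(1) u'(2) pu unfolding preds_def by blast
  have u'u: "(u', u) \<in> arcs n E'" using total(2) A(2) pu' unfolding preds_def by blast
  show ?thesis
  proof (cases "u < u'")
    case True
    then show ?thesis using no_divergence[OF E E' phi_eq A pu pu' uu' u'u ord] by blast
  next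
    case False
    then have "u' < u" using \<open>u' \<noteq> u\<close> by simp
    moreover have "\<forall>x\<in>A. \<forall>y\<in>A. (x, y) \<in> arcs n E' \<longleftrightarrow> (x, y) \<in> arcs n E" using ord by blast
    ultimately show ?thesis using no_divergence[OF E' E phi_eq[symmetric] A(1) u'(2) pu' pu u'u uu'] by blast
  qed
qed

section \<open>phi maps parking graphs to parking functions\<close>

lemma rank_permutes:
  assumes E: "E \<in> parking_graphs n"
  shows "(\<lambda>i. if i \<in> {1..n} then card (preds n E i) + 1 else i) permutes {1..n}"
    (is "?\<sigma> permutes _")
proof -
  have into: "?\<sigma> ` {1..n} \<subseteq> {1..n}"
  proof
    fix y assume "y \<in> ?\<sigma> ` {1..n}"
    then obtain i where i: "i \<in> {1..n}" "y = ?\<sigma> i" by blast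
    have "card (preds n E i) \<le> card ({1..n} - {i})" by (rule card_mono) (use preds_subset in auto)
    then show "y \<in> {1..n}" using i by auto
  qed
  have inj: "inj_on ?\<sigma> {1..n}"
  proof (rule inj_onI, rule ccontr)
    fix x y assume xy: "x \<in> {1..n}" "y \<in> {1..n}" "?\<sigma> x = ?\<sigma> y" "x \<noteq> y"
    then show False
      using arc_total[OF xy(1,2,4)] card_preds_less[OF E, of x y] card_preds_less[OF E, of y x] by auto
  qed
  have "?\<sigma> ` {1..n} = {1..n}" by (rule endo_inj_surj) (use into inj in auto)
  then have "bij_betw ?\<sigma> {1..n} {1..n}" using inj unfolding bij_betw_def by simp
  then show ?thesis by (rule bij_imp_permutes) auto
qed

text \<open>Only predecessors are counted, so phi E is bounded by the rank permutation.\<close>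
lemma phi_in_parking_functions:
  assumes E: "E \<in> parking_graphs n"
  shows "phi n E \<in> parking_functions n"
proof -
  have "phi n E i \<le> card (preds n E i) + 1" if "i \<in> {1..n}" for i
    using phi_eq_card[OF that] card_mono[OF finite_preds] unfolding counted_preds_eq
    by (metis (no_types, lifting) add_le_mono1 mem_Collect_eq subsetI)
  then show ?thesis unfolding parking_functions_def
    using rank_permutes[OF E] by (intro CollectI conjI exI[of _ "\<lambda>i. if i \<in> {1..n} then card (preds n E i) + 1 else i"]) (auto simp: phi_def)
qed

section \<open>The greedy construction of a parking graph\<close>

text \<open>A placement sequence g lists the vertices in the order of the graph under
  construction: g i is placed at step i.\<close>
definition smaller_before :: "(nat \<Rightarrow> nat) \<Rightarrow> nat \<Rightarrow> nat \<Rightarrow> nat" where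
  "smaller_before g i w = card {j. j < i \<and> g j < w}"

definition larger_before :: "(nat \<Rightarrow> nat) \<Rightarrow> nat \<Rightarrow> nat \<Rightarrow> nat" where
  "larger_before g m w = card {j. j < m \<and> w < g j}"

text \<open>Placed at step i, w receives up edges from all smaller earlier vertices and down
  edges from some of the larger ones; this can produce the in-degree a w - 1 iff w is
  placeable.\<close>
definition placeable :: "(nat \<Rightarrow> nat) \<Rightarrow> (nat \<Rightarrow> nat) \<Rightarrow> nat \<Rightarrow> nat \<Rightarrow> bool" where
  "placeable a g i w \<longleftrightarrow>
     smaller_before g i w + 1 \<le> a w \<and> a w \<le> smaller_before g i w + larger_before g i w + 1"

text \<open>The down edges into w come from the larger vertices among the first m placed ones,
  for the least m that suffices.\<close>
definition down_cut :: "(nat \<Rightarrow> nat) \<Rightarrow> (nat \<Rightarrow> nat) \<Rightarrow> nat \<Rightarrow> nat \<Rightarrow> nat" where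
  "down_cut a g i w = (LEAST m. a w \<le> smaller_before g i w + larger_before g (min m i) w + 1)"

definition preferred :: "(nat \<Rightarrow> nat) \<Rightarrow> (nat \<Rightarrow> nat) \<Rightarrow> nat \<Rightarrow> nat \<Rightarrow> nat \<Rightarrow> bool" where
  "preferred a g i u w \<longleftrightarrow>
     down_cut a g i u < down_cut a g i w \<or> (down_cut a g i u = down_cut a g i w \<and> w < u)"

definition greedy_run :: "nat \<Rightarrow> (nat \<Rightarrow> nat) \<Rightarrow> nat \<Rightarrow> (nat \<Rightarrow> nat) \<Rightarrow> bool" where
  "greedy_run n a t g \<longleftrightarrow> inj_on g {..<t} \<and> g ` {..<t} \<subseteq> {1..n} \<and>
     (\<forall>i<t. placeable a g i (g i) \<and>
        (\<forall>w\<in>{1..n} - g ` {..<Suc i}. placeable a g i w \<longrightarrow> preferred a g i (g i) w))"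

text \<open>The edge between the vertices placed at steps l < m, the earlier one being larger,
  is a down edge iff the larger vertices placed up to step l are still needed as down
  predecessors of g m.\<close>
definition down_edge :: "(nat \<Rightarrow> nat) \<Rightarrow> (nat \<Rightarrow> nat) \<Rightarrow> nat \<Rightarrow> nat \<Rightarrow> bool" where
  "down_edge a g l m \<longleftrightarrow> smaller_before g m (g m) + larger_before g (Suc l) (g m) + 1 \<le> a (g m)"

lemma prefix_cong:
  assumes agree: "\<And>j. j < i \<Longrightarrow> g j = g' j"
  shows "smaller_before g i w = smaller_before g' i w"
    and "m \<le> i \<Longrightarrow> larger_before g m w = larger_before g' m w"
    and "placeable a g i w = placeable a g' i w"
    and "down_cut a g i w = down_cut a g' i w"
    and "preferred a g i u w = preferred a g' i u w"
proof -
  show sm: "smaller_before g i w = smaller_before g' i w" for w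
    unfolding smaller_before_def using agree by (metis (lifting) Collect_cong)
  show lg: "larger_before g m w = larger_before g' m w" if "m \<le> i" for m w
    unfolding larger_before_def using agree that by (metis (lifting) Collect_cong less_le_trans)
  show "placeable a g i w = placeable a g' i w" unfolding placeable_def by (simp add: sm lg)
  show cut: "down_cut a g i w = down_cut a g' i w" for w unfolding down_cut_def by (simp add: sm lg)
  show "preferred a g i u w = preferred a g' i u w" unfolding preferred_def by (simp add: cut)
qed

lemma smaller_before_Suc: "smaller_before g (Suc i) w = smaller_before g i w + (if g i < w then 1 else 0)"
proof -
  have "{j. j < Suc i \<and> g j < w} = {j. j < i \<and> g j < w} \<union> (if g i < w then {i} else {})"
    by (auto simp: less_Suc_eq)
  then show ?thesis unfolding smaller_before_def by (auto simp: card_insert_if)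
qed

lemma larger_before_Suc: "larger_before g (Suc i) w = larger_before g i w + (if w < g i then 1 else 0)"
proof -
  have "{j. j < Suc i \<and> w < g j} = {j. j < i \<and> w < g j} \<union> (if w < g i then {i} else {})"
    by (auto simp: less_Suc_eq)
  then show ?thesis unfolding larger_before_def by (auto simp: card_insert_if)
qed

lemma larger_before_mono: "m \<le> m' \<Longrightarrow> larger_before g m w \<le> larger_before g m' w"
  unfolding larger_before_def by (rule card_mono) auto

lemma smaller_before_0 [simp]: "smaller_before g 0 w = 0"
  unfolding smaller_before_def by simp

text \<open>A vertex not yet placed is smaller or larger than each placed one.\<close>
lemma smaller_larger_unplaced:
  assumes "w \<notin> g ` {..<i}"
  shows "smaller_before g i w + larger_before g i w = i"
proof -
  have "{..<i} = {j. j < i \<and> g j < w} \<union> {j. j < i \<and> w < g j}"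
  proof (rule set_eqI)
    fix j
    have "j < i \<Longrightarrow> g j \<noteq> w" using assms by blast
    then show "j \<in> {..<i} \<longleftrightarrow> j \<in> {j. j < i \<and> g j < w} \<union> {j. j < i \<and> w < g j}"
      by (cases "g j < w") auto
  qed
  moreover have "card ({j. j < i \<and> g j < w} \<union> {j. j < i \<and> w < g j})
      = card {j. j < i \<and> g j < w} + card {j. j < i \<and> w < g j}"
    by (rule card_Un_disjoint) auto
  ultimately show ?thesis unfolding smaller_before_def larger_before_def by (metis card_lessThan)
qed

lemma down_cut_holds:
  assumes "placeable a g i w"
  shows "a w \<le> smaller_before g i w + larger_before g (min (down_cut a g i w) i) w + 1"
  unfolding down_cut_def by (rule LeastI[of _ i]) (use assms in \<open>simp add: placeable_def\<close>)

lemma down_cut_minimal: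
  assumes "m < down_cut a g i w"
  shows "\<not> a w \<le> smaller_before g i w + larger_before g (min m i) w + 1"
  using assms unfolding down_cut_def by (rule not_less_Least)

text \<open>During a greedy run an unplaced vertex w always has a w above the number of
  smaller placed vertices: when a smaller vertex g i is placed while a w would become too
  small, w would be placeable with cut 0 and hence be preferred to g i.\<close>
lemma greedy_lower_bound:
  assumes run: "greedy_run n a t g" and pos: "\<forall>w\<in>{1..n}. 1 \<le> a w"
  shows "i \<le> t \<Longrightarrow> w \<in> {1..n} - g ` {..<i} \<Longrightarrow> smaller_before g i w + 1 \<le> a w"
proof (induction i arbitrary: w)
  case 0
  then show ?case using pos by simp
next
  case (Suc i)
  have it: "i < t" using Suc.prems by simp
  have w: "w \<in> {1..n} - g ` {..<Suc i}" "w \<notin> g ` {..<i}" using Suc.prems by (auto simp: lessThan_Suc)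
  have IH: "smaller_before g i w + 1 \<le> a w" using Suc.IH it w Suc.prems by simp
  show ?case
  proof (rule ccontr)
    assume "\<not> ?case"
    then have gi: "g i < w" and eq: "a w = smaller_before g i w + 1"
      using IH smaller_before_Suc[of g i w] by (auto split: if_splits)
    then have "placeable a g i w" unfolding placeable_def by simp
    then have "preferred a g i (g i) w" using run it w(1) unfolding greedy_run_def by blast
    moreover have "down_cut a g i w = 0" unfolding down_cut_def using eq by (intro Least_eq_0) simp
    ultimately show False using gi unfolding preferred_def by simp
  qed
qed

lemma parking_function_many_small:
  assumes a: "a \<in> parking_functions n" and t: "t < n"
  shows "t + 1 \<le> card {w\<in>{1..n}. a w \<le> t + 1}"
proof -
  obtain \<sigma> where \<sigma>: "\<sigma> permutes {1..n}" "\<forall>i\<in>{1..n}. a i \<le> \<sigma> i"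
    using a unfolding parking_functions_def by blast
  have bij: "bij_betw \<sigma> {1..n} {1..n}" using \<sigma>(1) by (rule permutes_imp_bij)
  define M where "M = {w\<in>{1..n}. \<sigma> w \<le> t + 1}"
  have "\<sigma> ` M = {1..t+1}"
  proof
    show "\<sigma> ` M \<subseteq> {1..t+1}" using bij unfolding M_def bij_betw_def by auto
    show "{1..t+1} \<subseteq> \<sigma> ` M"
    proof
      fix y assume y: "y \<in> {1..t+1}"
      then have "y \<in> \<sigma> ` {1..n}" using bij t unfolding bij_betw_def by auto
      then show "y \<in> \<sigma> ` M" using y unfolding M_def by auto
    qed
  qed
  moreover have "inj_on \<sigma> M" using bij unfolding bij_betw_def M_def by (auto intro: inj_on_subset)
  ultimately have "card M = t + 1" by (metis card_atLeastAtMost card_image diff_Suc_1 Suc_eq_plus1)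
  moreover have "M \<subseteq> {w\<in>{1..n}. a w \<le> t + 1}" using \<sigma>(2) unfolding M_def by force
  ultimately show ?thesis using card_mono[of "{w\<in>{1..n}. a w \<le> t + 1}" M] by simp
qed

text \<open>As long as vertices remain, some unplaced vertex is placeable: one with a w \<le> t + 1
  exists by the parking condition.\<close>
lemma placeable_exists:
  assumes run: "greedy_run n a t g" and a: "a \<in> parking_functions n" and t: "t < n"
  shows "\<exists>w\<in>{1..n} - g ` {..<t}. placeable a g t w"
proof -
  have "\<not> {w\<in>{1..n}. a w \<le> t + 1} \<subseteq> g ` {..<t}"
  proof
    assume "{w\<in>{1..n}. a w \<le> t + 1} \<subseteq> g ` {..<t}"
    then have "card {w\<in>{1..n}. a w \<le> t + 1} \<le> card (g ` {..<t})" by (rule card_mono[rotated]) simp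
    also have "\<dots> \<le> t" using card_image_le[of "{..<t}" g] by simp
    finally show False using parking_function_many_small[OF a t] by simp
  qed
  then obtain w where w: "w \<in> {1..n}" "a w \<le> t + 1" "w \<notin> g ` {..<t}" by blast
  have "1 \<le> a w" using a w unfolding parking_functions_def by auto
  then have "placeable a g t w"
    using greedy_lower_bound[OF run, of t w] a w smaller_larger_unplaced[OF w(3)]
    unfolding placeable_def parking_functions_def by simp
  then show ?thesis using w by blast
qed

lemma lex_best:
  fixes f :: "nat \<Rightarrow> nat"
  assumes "finite C" "C \<noteq> {}"
  shows "\<exists>w0\<in>C. \<forall>w\<in>C. w \<noteq> w0 \<longrightarrow> f w0 < f w \<or> (f w0 = f w \<and> w < w0)"
proof -
  define C0 where "C0 = {w\<in>C. f w = Min (f ` C)}"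
  have fin: "finite C0" using assms unfolding C0_def by simp
  have "Min (f ` C) \<in> f ` C" using assms by simp
  then have "C0 \<noteq> {}" unfolding C0_def by auto
  then have w0: "Max C0 \<in> C0" using fin by simp
  have "f (Max C0) < f w \<or> (f (Max C0) = f w \<and> w < Max C0)" if "w \<in> C" "w \<noteq> Max C0" for w
  proof -
    have "f (Max C0) \<le> f w" using w0 that assms unfolding C0_def by simp
    moreover have "w < Max C0" if "f w = f (Max C0)"
      using that \<open>w \<in> C\<close> \<open>w \<noteq> Max C0\<close> w0 fin unfolding C0_def by (simp add: le_neq_implies_less)
    ultimately show ?thesis by auto
  qed
  then show ?thesis using w0 unfolding C0_def by blast
qed

lemma greedy_extend:
  assumes run: "greedy_run n a t g" and a: "a \<in> parking_functions n" and t: "t < n"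
  shows "\<exists>g'. greedy_run n a (Suc t) g'"
proof -
  define C where "C = {w\<in>{1..n} - g ` {..<t}. placeable a g t w}"
  have "finite C" "C \<noteq> {}" using placeable_exists[OF run a t] unfolding C_def by auto
  then obtain w0 where w0: "w0 \<in> C" and best: "\<And>w. w \<in> C \<Longrightarrow> w \<noteq> w0 \<Longrightarrow> preferred a g t w0 w"
    using lex_best[of C "down_cut a g t"] unfolding preferred_def by blast
  define g' where "g' = g(t := w0)"
  have agree: "\<And>j. j < t \<Longrightarrow> g' j = g j" unfolding g'_def by simp
  then have agree_i: "\<And>j. j < i \<Longrightarrow> g' j = g j" if "i \<le> t" for i using that by simp
  have img: "g' ` {..<i} = g ` {..<i}" if "i \<le> t" for i using agree_i[OF that] by (auto simp: image_iff)
  have gt: "g' t = w0" unfolding g'_def by simp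
  have img_Suc: "g' ` {..<Suc t} = insert w0 (g ` {..<t})" using img[of t] gt by (simp add: lessThan_Suc)
  have "inj_on g' {..<t} = inj_on g {..<t}" by (rule inj_on_cong) (simp add: agree)
  moreover have "g' t \<notin> g' ` {..<t}" using w0 img[of t] gt unfolding C_def by simp
  ultimately have inj: "inj_on g' {..<Suc t}" using run unfolding greedy_run_def by (simp add: lessThan_Suc)
  have rng: "g' ` {..<Suc t} \<subseteq> {1..n}" using run w0 unfolding img_Suc greedy_run_def C_def by blast
  have step: "placeable a g' i (g' i) \<and>
      (\<forall>w\<in>{1..n} - g' ` {..<Suc i}. placeable a g' i w \<longrightarrow> preferred a g' i (g' i) w)"
    if i: "i < Suc t" for i
  proof (cases "i = t")
    case True
    have pl: "placeable a g' t w = placeable a g t w" for w by (rule prefix_cong(3)[OF agree])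
    have pr: "preferred a g' t w0 w = preferred a g t w0 w" for w by (rule prefix_cong(5)[OF agree])
    have "placeable a g t w0" using w0 unfolding C_def by simp
    moreover have "preferred a g t w0 w" if "w \<in> {1..n} - g' ` {..<Suc t}" "placeable a g t w" for w
      using best[of w] that unfolding img_Suc C_def by blast
    ultimately show ?thesis unfolding True gt pl pr by blast
  next
    case False
    then have it: "i < t" "Suc i \<le> t" using i by simp_all
    have agree': "\<And>j. j < i \<Longrightarrow> g' j = g j" using agree_i it by simp
    have pl: "placeable a g' i w = placeable a g i w" for w by (rule prefix_cong(3)[OF agree'])
    have pr: "preferred a g' i u w = preferred a g i u w" for u w by (rule prefix_cong(5)[OF agree'])
    have "placeable a g i (g i) \<and>
        (\<forall>w\<in>{1..n} - g ` {..<Suc i}. placeable a g i w \<longrightarrow> preferred a g i (g i) w)"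
      using run it(1) unfolding greedy_run_def by blast
    then show ?thesis unfolding agree[OF it(1)] pl pr img[OF it(2)] .
  qed
  have "greedy_run n a (Suc t) g'" unfolding greedy_run_def by (intro conjI inj rng allI impI step)
  then show ?thesis by (intro exI)
qed

lemma greedy_run_exists:
  assumes a: "a \<in> parking_functions n"
  shows "t \<le> n \<Longrightarrow> \<exists>g. greedy_run n a t g"
proof (induction t)
  case 0
  have "greedy_run n a 0 id" unfolding greedy_run_def by simp
  then show ?case by (intro exI)
next
  case (Suc t)
  then obtain g where g: "greedy_run n a t g" by (metis Suc_leD)
  from Suc.prems have "t < n" by simp
  with g show ?case by (rule greedy_extend[OF _ a])
qed

section \<open>The greedy graph satisfies the source-sink condition\<close>

lemma nat_crossing:
  fixes f :: "nat \<Rightarrow> nat"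
  shows "lo \<le> hi \<Longrightarrow> f lo \<le> c \<Longrightarrow> c < f hi \<Longrightarrow> \<exists>m. lo \<le> m \<and> m < hi \<and> f m \<le> c \<and> c < f (Suc m)"
proof (induction hi)
  case 0
  then show ?case by simp
next
  case (Suc hi)
  then have "lo \<le> hi" by (metis le_SucE not_le)
  show ?case
  proof (cases "f hi \<le> c")
    case True
    then show ?thesis using Suc.prems \<open>lo \<le> hi\<close> by (intro exI[of _ hi]) simp
  next
    case False
    then obtain m where "lo \<le> m \<and> m < hi \<and> f m \<le> c \<and> c < f (Suc m)"
      using Suc.IH Suc.prems \<open>lo \<le> hi\<close> by auto
    then show ?thesis by (intro exI[of _ m]) simp
  qed
qed

text \<open>Let X = g lx be larger than Y = g ly, placed later with a down edge from X.  Then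
  every vertex Z < X still unplaced after step ly already needs X as a down predecessor
  at step ly: otherwise Z would be placeable with a smaller cut than Y.\<close>
lemma down_edge_reaches_unplaced:
  assumes run: "greedy_run n a n g" and pos: "\<forall>w\<in>{1..n}. 1 \<le> a w"
    and l: "lx < ly" "ly < n" and Z: "Z \<in> {1..n}" "Z \<notin> g ` {..<Suc ly}"
    and ZX: "Z < g lx" and YX: "g ly < g lx" and down: "down_edge a g lx ly"
  shows "smaller_before g ly Z + larger_before g (Suc lx) Z + 1 \<le> a Z"
proof (cases "placeable a g ly Z")
  case True
  have Y: "placeable a g ly (g ly)" and pref: "preferred a g ly (g ly) Z"
    using run l(2) Z True unfolding greedy_run_def by blast+
  have lgY: "larger_before g (Suc lx) (g ly) = larger_before g lx (g ly) + 1"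
    using larger_before_Suc[of g lx "g ly"] YX by simp
  have "lx < down_cut a g ly (g ly)"
  proof (rule ccontr)
    assume "\<not> lx < down_cut a g ly (g ly)"
    then have "larger_before g (min (down_cut a g ly (g ly)) ly) (g ly) \<le> larger_before g lx (g ly)"
      by (intro larger_before_mono) simp
    then show False using down_cut_holds[OF Y] down lgY unfolding down_edge_def by simp
  qed
  then have "lx < down_cut a g ly Z" using pref unfolding preferred_def by auto
  then have "\<not> a Z \<le> smaller_before g ly Z + larger_before g (min lx ly) Z + 1" by (rule down_cut_minimal)
  moreover have "larger_before g (Suc lx) Z = larger_before g lx Z + 1"
    using larger_before_Suc[of g lx Z] ZX by simp
  ultimately show ?thesis using l by (simp add: min_def)
next
  case False
  have "smaller_before g ly Z + 1 \<le> a Z"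
    using greedy_lower_bound[OF run pos, of ly Z] Z l by (auto simp: lessThan_Suc)
  then have "\<not> a Z \<le> smaller_before g ly Z + larger_before g ly Z + 1" using False unfolding placeable_def by simp
  moreover have "larger_before g (Suc lx) Z \<le> larger_before g ly Z" using l by (intro larger_before_mono) simp
  ultimately show ?thesis by simp
qed

text \<open>If at step m the count for an unplaced Z is reached exactly with X = g lx as its
  last down predecessor, and W = g m < Z is placed instead, then the greedy preference
  forces the cut of W below lx, so the edge from X to W is not a down edge.\<close>
lemma exact_cut_blocks_down:
  assumes run: "greedy_run n a n g" and m: "lx < m" "m < n"
    and Z: "Z \<in> {1..n}" "Z \<notin> g ` {..<Suc m}" and WZ: "g m < Z" and ZX: "Z < g lx"
    and exact: "smaller_before g m Z + larger_before g (Suc lx) Z + 1 = a Z"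
  shows "\<not> down_edge a g lx m"
proof
  assume down: "down_edge a g lx m"
  have lgZ: "larger_before g (Suc lx) Z = larger_before g lx Z + 1"
    using larger_before_Suc[of g lx Z] ZX by simp
  have "placeable a g m Z"
    using exact larger_before_mono[of "Suc lx" m g Z] m unfolding placeable_def by simp
  moreover have "down_cut a g m Z \<le> Suc lx" unfolding down_cut_def
    by (rule Least_le) (use exact m in \<open>simp add: min_def\<close>)
  moreover have "Suc lx \<le> down_cut a g m Z"
  proof (rule ccontr)
    assume "\<not> Suc lx \<le> down_cut a g m Z"
    then have "larger_before g (min (down_cut a g m Z) m) Z \<le> larger_before g lx Z"
      by (intro larger_before_mono) simp
    then show False using down_cut_holds[OF \<open>placeable a g m Z\<close>] exact lgZ by simp
  qed
  ultimately have cutZ: "placeable a g m Z" "down_cut a g m Z = Suc lx" by simp_all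
  have W: "placeable a g m (g m)" "preferred a g m (g m) Z"
    using run m(2) Z cutZ(1) unfolding greedy_run_def by blast+
  then have "down_cut a g m (g m) \<le> lx" using cutZ(2) WZ unfolding preferred_def by auto
  then have "larger_before g (min (down_cut a g m (g m)) m) (g m) \<le> larger_before g lx (g m)"
    by (intro larger_before_mono) simp
  moreover have "larger_before g (Suc lx) (g m) = larger_before g lx (g m) + 1"
    using larger_before_Suc[of g lx "g m"] WZ ZX by simp
  ultimately show False using down_cut_holds[OF W(1)] down unfolding down_edge_def by simp
qed

text \<open>Down edges out of a vertex X persist: if X = g lx has a down edge to a smaller
  vertex placed at step ly, it has down edges to all smaller vertices placed later.
  Otherwise follow the count of a later Z between steps ly and lz: at the step m where
  it crosses a Z, the vertex placed there has no down edge from X, contradicting the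
  induction hypothesis.\<close>
lemma down_edge_persists:
  assumes run: "greedy_run n a n g" and pos: "\<forall>w\<in>{1..n}. 1 \<le> a w"
  shows "lx < ly \<Longrightarrow> ly < lz \<Longrightarrow> lz < n \<Longrightarrow> g ly < g lx \<Longrightarrow> g lz < g lx \<Longrightarrow>
         down_edge a g lx ly \<Longrightarrow> down_edge a g lx lz"
proof (induction lz rule: less_induct)
  case (less lz)
  define Z where "Z = g lz"
  have Zn: "Z \<in> {1..n}" using run less.prems unfolding greedy_run_def Z_def by auto
  have Zunplaced: "Z \<notin> g ` {..<Suc m}" if "m < lz" for m
  proof
    assume "Z \<in> g ` {..<Suc m}"
    then obtain j where "j < Suc m" "g j = g lz" unfolding Z_def by auto
    moreover have "inj_on g {..<n}" using run unfolding greedy_run_def by simp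
    moreover have "j \<in> {..<n}" "lz \<in> {..<n}" using \<open>j < Suc m\<close> that less.prems by auto
    ultimately have "j = lz" by (metis inj_onD)
    then show False using \<open>j < Suc m\<close> that by simp
  qed
  show ?case
  proof (rule ccontr)
    assume not_down: "\<not> down_edge a g lx lz"
    define h where "h m = smaller_before g m Z + larger_before g (Suc lx) Z + 1" for m
    have "h ly \<le> a Z" unfolding h_def
      using down_edge_reaches_unplaced[OF run pos _ _ Zn Zunplaced] less.prems unfolding Z_def by simp
    moreover have "a Z < h lz" using not_down unfolding down_edge_def h_def Z_def by simp
    ultimately obtain m where m: "ly \<le> m" "m < lz" "h m \<le> a Z" "a Z < h (Suc m)"
      using nat_crossing[of ly lz h "a Z"] less.prems by auto
    then have W: "g m < Z" and exact: "h m = a Z"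
      using smaller_before_Suc[of g m Z] unfolding h_def by (auto split: if_splits)
    have "\<not> down_edge a g lx m"
      using exact_cut_blocks_down[OF run _ _ Zn Zunplaced[OF m(2)] W] exact less.prems m
      unfolding h_def Z_def by simp
    moreover have "ly < m" using calculation m(1) less.prems by (metis le_neq_implies_less)
    moreover have "g m < g lx" using W less.prems unfolding Z_def by simp
    ultimately show False using less.IH[OF m(2)] less.prems m(2) by simp
  qed
qed

lemma triangle_cond_from_order:
  fixes p :: "nat \<Rightarrow> nat"
  assumes arcs: "\<And>x y. (x, y) \<in> arcs n E \<longleftrightarrow> x \<in> {1..n} \<and> y \<in> {1..n} \<and> p x < p y"
    and H: "\<And>x y z. x \<in> {1..n} \<Longrightarrow> y \<in> {1..n} \<Longrightarrow> z \<in> {1..n} \<Longrightarrow> p x < p y \<Longrightarrow> p y < p z \<Longrightarrow>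
              etype E x z = Downish \<Longrightarrow> etype E x y \<noteq> Down \<and> etype E y z \<noteq> Down"
  shows "triangle_cond n E"
  unfolding triangle_cond_def Let_def
proof (intro ballI impI allI, elim conjE)
  fix a b c s t
  assume abc: "a \<in> {1..n}" "b \<in> {1..n}" "c \<in> {1..n}" "a \<noteq> b" "b \<noteq> c" "a \<noteq> c"
    and Dn: "Down \<in> {etype E a b, etype E b c, etype E a c}"
    and st: "s \<in> {a, b, c}" "t \<in> {a, b, c}"
    and src: "\<forall>u\<in>{a, b, c}. (u, s) \<notin> arcs n E" and snk: "\<forall>u\<in>{a, b, c}. (t, u) \<notin> arcs n E"
    and "s \<noteq> t"
  show "etype E s t \<noteq> Downish"
  proof
    assume W: "etype E s t = Downish"
    have T: "{a, b, c} \<subseteq> {1..n}" using abc by auto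
    have ps: "\<forall>u\<in>{a,b,c}. \<not> p u < p s" using src T st by (auto simp: arcs)
    have pt: "\<forall>u\<in>{a,b,c}. \<not> p t < p u" using snk T st by (auto simp: arcs)
    have pne: "u \<in> {a,b,c} \<Longrightarrow> v \<in> {a,b,c} \<Longrightarrow> u \<noteq> v \<Longrightarrow> p u \<noteq> p v" for u v
      using arc_total[of u n v E] T by (auto simp: arcs)
    obtain m where m: "m \<in> {a,b,c}" "m \<noteq> s" "m \<noteq> t" using abc \<open>s \<noteq> t\<close> by blast
    have T3: "{a,b,c} = {s, m, t}" using abc st m \<open>s \<noteq> t\<close> by blast
    have o1: "p s < p m" using ps m(1) pne[OF m(1) st(1) m(2)] by auto
    have o2: "p m < p t" using pt m(1) pne[OF m(1) st(2) m(3)] by auto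
    have in_range: "s \<in> {1..n}" "m \<in> {1..n}" "t \<in> {1..n}" using T st m by auto
    have nd: "etype E s m \<noteq> Down" "etype E m t \<noteq> Down"
      using H[OF in_range o1 o2 W] by auto
    have all: "etype E u v \<noteq> Down" if "u \<in> {s,m,t}" "v \<in> {s,m,t}" "u \<noteq> v" for u v
      using that nd W etype_sym[of s m E] etype_sym[of m t E] etype_sym[of s t E] by auto
    have "etype E a b \<noteq> Down" "etype E b c \<noteq> Down" "etype E a c \<noteq> Down"
      using all T3 abc by auto
    then show False using Dn by auto
  qed
qed


lemma card_prefix_bounded:
  "card {l. l < m \<and> P l \<and> card {l'. l' < Suc l \<and> P l'} \<le> K} = min K (card {l. l < m \<and> P l})"
proof (induction m)
  case 0
  then show ?case by simp
next
  case (Suc m)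
  have "{l'. l' < Suc m \<and> P l'} = {l. l < m \<and> P l} \<union> (if P m then {m} else {})"
    by (auto simp: less_Suc_eq)
  then have count: "card {l'. l' < Suc m \<and> P l'} = card {l. l < m \<and> P l} + (if P m then 1 else 0)"
    by (auto simp: card_insert_if)
  have "{l. l < Suc m \<and> P l \<and> card {l'. l' < Suc l \<and> P l'} \<le> K} =
        {l. l < m \<and> P l \<and> card {l'. l' < Suc l \<and> P l'} \<le> K} \<union>
        (if P m \<and> card {l'. l' < Suc m \<and> P l'} \<le> K then {m} else {})"
    by (auto simp: less_Suc_eq)
  then have "card {l. l < Suc m \<and> P l \<and> card {l'. l' < Suc l \<and> P l'} \<le> K} =
     card {l. l < m \<and> P l \<and> card {l'. l' < Suc l \<and> P l'} \<le> K} +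
        (if P m \<and> card {l'. l' < Suc m \<and> P l'} \<le> K then 1 else 0)"
    by (auto simp: card_insert_if)
  then show ?case using Suc.IH count by auto
qed

definition position :: "nat \<Rightarrow> (nat \<Rightarrow> nat) \<Rightarrow> nat \<Rightarrow> nat" where
  "position n g = the_inv_into {..<n} g"

definition greedy_graph :: "nat \<Rightarrow> (nat \<Rightarrow> nat) \<Rightarrow> (nat \<Rightarrow> nat) \<Rightarrow> nat \<Rightarrow> nat \<Rightarrow> edge_type" where
  "greedy_graph n a g j k =
     (if (j, k) \<in> edge_pairs n then
        (if position n g j < position n g k then Up
         else if down_edge a g (position n g k) (position n g j) then Down else Downish)
      else Down)"

context
  fixes n :: nat and a g :: "nat \<Rightarrow> nat"
  assumes run: "greedy_run n a n g" and pf: "a \<in> parking_functions n"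
begin

lemma greedy_bij: "bij_betw g {..<n} {1..n}"
proof -
  have inj: "inj_on g {..<n}" and rng: "g ` {..<n} \<subseteq> {1..n}" using run unfolding greedy_run_def by auto
  have "card (g ` {..<n}) = card {1..n}" using card_image[OF inj] by simp
  then have "g ` {..<n} = {1..n}" using card_subset_eq[OF _ rng] by simp
  then show ?thesis using inj unfolding bij_betw_def by simp
qed

lemma position_in_range: "v \<in> {1..n} \<Longrightarrow> position n g v < n"
  using bij_betwE[OF bij_betw_the_inv_into[OF greedy_bij]] unfolding position_def by auto

lemma g_position: "v \<in> {1..n} \<Longrightarrow> g (position n g v) = v"
  using f_the_inv_into_f_bij_betw[OF greedy_bij] unfolding position_def by simp

lemma position_g: "l < n \<Longrightarrow> position n g (g l) = l"
  using the_inv_into_f_f[OF bij_betw_imp_inj_on[OF greedy_bij]] unfolding position_def by simp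

lemma greedy_etype:
  assumes "x \<in> {1..n}" "y \<in> {1..n}" "x \<noteq> y"
  shows "etype (greedy_graph n a g) x y =
    (if x < y then
       (if position n g x < position n g y then Up
        else if down_edge a g (position n g y) (position n g x) then Down else Downish)
     else
       (if position n g y < position n g x then Up
        else if down_edge a g (position n g x) (position n g y) then Down else Downish))"
  using assms unfolding etype_def greedy_graph_def edge_pairs_def by auto

lemma greedy_arc_iff:
  "(x, y) \<in> arcs n (greedy_graph n a g) \<longleftrightarrow>
     x \<in> {1..n} \<and> y \<in> {1..n} \<and> position n g x < position n g y"
proof (cases "x \<in> {1..n} \<and> y \<in> {1..n} \<and> x \<noteq> y")
  case True
  then have "position n g x \<noteq> position n g y" using g_position by metis
  then show ?thesis using True greedy_etype[of x y] unfolding arc_iff by (auto split: if_splits)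
next
  case False
  then show ?thesis unfolding arc_iff by auto
qed

text \<open>The hypothesis of triangle_cond_from_order: below a downish long side the first
  short side is no down edge by down_edge_persists, the second one since down_edge is
  monotone in its first argument.\<close>
lemma greedy_downish_shortcut:
  assumes xyz: "x \<in> {1..n}" "y \<in> {1..n}" "z \<in> {1..n}"
    and ord: "position n g x < position n g y" "position n g y < position n g z"
    and W: "etype (greedy_graph n a g) x z = Downish"
  shows "etype (greedy_graph n a g) x y \<noteq> Down \<and> etype (greedy_graph n a g) y z \<noteq> Down"
proof -
  let ?E = "greedy_graph n a g" and ?p = "position n g"
  have ne: "x \<noteq> y" "y \<noteq> z" "x \<noteq> z" using ord by auto
  have pos: "\<forall>w\<in>{1..n}. 1 \<le> a w" using pf unfolding parking_functions_def by auto
  have types: "etype ?E u v = (if u < v then Up else if down_edge a g (?p u) (?p v) then Down else Downish)"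
    if "u \<in> {1..n}" "v \<in> {1..n}" "?p u < ?p v" for u v
    using greedy_etype[of u v] that by (cases "u = v") auto
  have zx: "z < x" and not_down: "\<not> down_edge a g (?p x) (?p z)"
    using W types[OF xyz(1,3)] ord ne(3) by (simp_all split: if_splits)
  have "etype ?E y z \<noteq> Down"
  proof
    assume "etype ?E y z = Down"
    then have "down_edge a g (?p y) (?p z)" using types[OF xyz(2,3) ord(2)] by (simp split: if_splits)
    moreover have "larger_before g (Suc (?p x)) (g (?p z)) \<le> larger_before g (Suc (?p y)) (g (?p z))"
      using ord by (intro larger_before_mono) simp
    ultimately have "down_edge a g (?p x) (?p z)" unfolding down_edge_def by simp
    then show False using not_down by simp
  qed
  moreover have "etype ?E x y \<noteq> Down"
  proof
    assume "etype ?E x y = Down"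
    then have "down_edge a g (?p x) (?p y)" using types[OF xyz(1,2) ord(1)] by (simp split: if_splits)
    moreover have "g (?p y) < g (?p x)" "g (?p z) < g (?p x)"
      using \<open>etype ?E x y = Down\<close> types[OF xyz(1,2) ord(1)] zx ne(1)
      by (simp_all add: g_position[OF xyz(1)] g_position[OF xyz(2)] g_position[OF xyz(3)] split: if_splits)
    ultimately have "down_edge a g (?p x) (?p z)"
      using down_edge_persists[OF run pos ord(1,2) position_in_range[OF xyz(3)]] by simp
    then show False using not_down by simp
  qed
  ultimately show ?thesis by simp
qed

lemma greedy_graph_parking: "greedy_graph n a g \<in> parking_graphs n"
proof -
  have "arcs n (greedy_graph n a g) \<subseteq> measure (position n g)" using greedy_arc_iff by auto
  then have "acyclic (arcs n (greedy_graph n a g))" using wf_subset wf_acyclic by blast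
  moreover have "triangle_cond n (greedy_graph n a g)"
    using triangle_cond_from_order[OF greedy_arc_iff greedy_downish_shortcut] by blast
  ultimately show ?thesis unfolding parking_graphs_def greedy_graph_def by auto
qed

lemma greedy_counted_preds:
  assumes i: "i \<in> {1..n}"
  defines "m \<equiv> position n g i"
  shows "counted_preds n (greedy_graph n a g) i =
    g ` {l. l < m \<and> (g l < i \<or> (i < g l \<and> down_edge a g l m))}"
proof -
  have m: "m < n" "g m = i" using position_in_range[OF i] g_position[OF i] unfolding m_def by auto
  have char: "u \<in> counted_preds n (greedy_graph n a g) i \<longleftrightarrow> position n g u < m \<and>
      (u < i \<or> (i < u \<and> down_edge a g (position n g u) m))" if u: "u \<in> {1..n}" for u
  proof (cases "u = i")
    case True
    then show ?thesis unfolding counted_preds_def m_def by simp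
  next
    case False
    then show ?thesis using greedy_etype[OF u i False] greedy_arc_iff[of u i] u i
      unfolding counted_preds_def m_def by (auto split: if_splits)
  qed
  show ?thesis
  proof (rule set_eqI, rule iffI)
    fix u assume c: "u \<in> counted_preds n (greedy_graph n a g) i"
    then have u: "u \<in> {1..n}" unfolding counted_preds_def by simp
    then have "position n g u \<in> {l. l < m \<and> (g l < i \<or> (i < g l \<and> down_edge a g l m))}"
      using char[OF u] c g_position[OF u] by simp
    then show "u \<in> g ` {l. l < m \<and> (g l < i \<or> (i < g l \<and> down_edge a g l m))}"
      using g_position[OF u] by (metis image_eqI)
  next
    fix u assume "u \<in> g ` {l. l < m \<and> (g l < i \<or> (i < g l \<and> down_edge a g l m))}"
    then obtain l where l: "l < m" "g l < i \<or> (i < g l \<and> down_edge a g l m)" and ul: "u = g l" by blast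
    have "g l \<in> {1..n}" using run l(1) m(1) unfolding greedy_run_def by (auto simp: image_subset_iff)
    moreover have "position n g (g l) = l" using position_g l(1) m(1) by simp
    ultimately show "u \<in> counted_preds n (greedy_graph n a g) i" using char l ul by simp
  qed
qed

lemma greedy_phi: "phi n (greedy_graph n a g) = a"
proof
  fix i
  show "phi n (greedy_graph n a g) i = a i"
  proof (cases "i \<in> {1..n}")
    case False
    then show ?thesis using pf unfolding phi_def parking_functions_def by simp
  next
    case i: True
    define m where "m = position n g i"
    have m: "m < n" "g m = i" using position_in_range[OF i] g_position[OF i] unfolding m_def by auto
    have pl: "placeable a g m i" using run m unfolding greedy_run_def by auto
    define K where "K = a i - (smaller_before g m i + 1)"
    have down_iff: "down_edge a g l m \<longleftrightarrow> card {l'. l' < Suc l \<and> i < g l'} \<le> K" for l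
      using pl m unfolding down_edge_def K_def placeable_def larger_before_def by auto
    define L where "L = {l. l < m \<and> (g l < i \<or> (i < g l \<and> down_edge a g l m))}"
    have "inj_on g L"
      using run m(1) unfolding greedy_run_def L_def by (auto intro: inj_on_subset[of g "{..<n}"])
    then have "card (counted_preds n (greedy_graph n a g) i) = card L"
      unfolding greedy_counted_preds[OF i] m_def[symmetric] L_def by (rule card_image)
    also have "L = {l. l < m \<and> g l < i} \<union> {l. l < m \<and> i < g l \<and> down_edge a g l m}"
      unfolding L_def by auto
    also have "card \<dots> = smaller_before g m i + card {l. l < m \<and> i < g l \<and> down_edge a g l m}"
      unfolding smaller_before_def by (rule card_Un_disjoint) auto
    also have "card {l. l < m \<and> i < g l \<and> down_edge a g l m} = min K (larger_before g m i)"
      unfolding down_iff larger_before_def by (rule card_prefix_bounded)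
    also have "min K (larger_before g m i) = K" using pl unfolding K_def placeable_def by (auto simp: min_def)
    finally show ?thesis using phi_eq_card[OF i] pl unfolding K_def placeable_def by auto
  qed
qed

end

theorem theorem2p2:
  fixes n :: nat
  shows "bij_betw (phi n) (parking_graphs n) (parking_functions n)"
proof -
  have "inj_on (phi n) (parking_graphs n)"
    by (rule inj_onI) (use phi_inj in auto)
  moreover have "phi n ` parking_graphs n = parking_functions n"
  proof
    show "phi n ` parking_graphs n \<subseteq> parking_functions n" using phi_in_parking_functions by auto
    show "parking_functions n \<subseteq> phi n ` parking_graphs n"
    proof
      fix a assume a: "a \<in> parking_functions n"
      then obtain g where "greedy_run n a n g" using greedy_run_exists by blast
      then show "a \<in> phi n ` parking_graphs n"
        using greedy_graph_parking greedy_phi a by (metis image_eqI)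
    qed
  qed
  ultimately show ?thesis unfolding bij_betw_def by simp
qed

end
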